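(* Let $q=(V_q,E_q,L_q)$ be a query hypergraph, $H=(V_H,E_H,L_H)$ a data hypergraph, and $M:E_q\to E_H$ any map. Then $M$ is an embedding of $q$ in $H$ if and only if $Sig\big(\bigcap_{e\in S}e\big)=Sig\big(\bigcap_{e\in S}M(e)\big)$ for every non-empty subset $S\subseteq E_q$.
   Context: A (vertex-labeled) hypergraph is a triple $H=(V,E,L)$ where $V$ is a finite set, $E$ is a set of non-empty subsets of $V$ (hyperedges, no repeated hyperedges) with $\bigcup_{e\in E}e=V$, and $L:V\to\Sigma$ assigns each vertex a label. For $S\subseteq V$, $Sig(S)$ is the multiset of labels $\{L(v)\mid v\in S\}$ (with multiplicity). A map $M:E_q\to E_H$ is an embedding of $q$ in $H$ if there exists an injective map $\phi:V_q\to V_H$ with $L_H(\phi(u))=L_q(u)$ for all $u\in V_q$ and $\{\phi(u):u\in e\}=M(e)$ for every $e\in E_q$. *)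

theory Defs
  imports Main "HOL-Library.Multiset"
begin

definition hypergraph :: "'v set \<Rightarrow> 'v set set \<Rightarrow> bool" where
  "hypergraph V E \<longleftrightarrow> finite V \<and> (\<forall>e\<in>E. e \<noteq> {} \<and> e \<subseteq> V) \<and> \<Union>E = V"

definition Sig :: "('v \<Rightarrow> 'l) \<Rightarrow> 'v set \<Rightarrow> 'l multiset" where
  "Sig L S = image_mset L (mset_set S)"

definition embedding ::
  "'v set \<Rightarrow> 'v set set \<Rightarrow> ('v \<Rightarrow> 'l) \<Rightarrow> 'w set \<Rightarrow> 'w set set \<Rightarrow> ('w \<Rightarrow> 'l)
   \<Rightarrow> ('v set \<Rightarrow> 'w set) \<Rightarrow> bool" where
  "embedding Vq Eq Lq VH EH LH M \<longleftrightarrow>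
     (\<exists>\<phi>. inj_on \<phi> Vq \<and> \<phi> ` Vq \<subseteq> VH \<and> (\<forall>u\<in>Vq. LH (\<phi> u) = Lq u)
          \<and> (\<forall>e\<in>Eq. \<phi> ` e = M e))"

end

theory Submission
  imports Defs
begin

text \<open>
  An embedding \<open>\<phi>\<close> maps each intersection \<open>\<Inter>S\<close> injectively and label-preservingly onto
  \<open>\<Inter>(M ` S)\<close>, so the signatures agree. Conversely, sort the vertices of \<open>q\<close> into cells by
  their label and the set of query edges containing them, and the vertices \<open>w\<close> of \<open>H\<close> by their
  label and the set of query edges \<open>e\<close> with \<open>w \<in> M e\<close>. The number of vertices of label \<open>l\<close>
  in \<open>\<Inter>S\<close> is the sum of the sizes of the cells indexed by supersets of \<open>S\<close>, so Moebius
  inversion over the supersets turns the signature conditions into equal sizes of corresponding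
  cells. Gluing bijections between corresponding cells yields the embedding.
\<close>

lemma hypergraph_finite_edges:
  assumes "hypergraph V E"
  shows "finite E" and "\<And>e. e \<in> E \<Longrightarrow> finite e"
proof -
  have "finite V" and "E \<subseteq> Pow V"
    using assms unfolding hypergraph_def by auto
  then show "finite E" and "\<And>e. e \<in> E \<Longrightarrow> finite e"
    by (auto intro: finite_subset)
qed

lemma count_Sig: "finite A \<Longrightarrow> count (Sig L A) l = card {x \<in> A. L x = l}"
  unfolding Sig_def by (simp add: count_image_mset Int_def) (metis (mono_tags, lifting) Collect_cong)

lemma Sig_image:
  assumes "inj_on \<phi> A" and "\<And>x. x \<in> A \<Longrightarrow> L' (\<phi> x) = L x"
  shows "Sig L' (\<phi> ` A) = Sig L A"
proof -
  have "Sig L' (\<phi> ` A) = image_mset (L' \<circ> \<phi>) (mset_set A)"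
    unfolding Sig_def using assms(1) by (simp flip: image_mset_mset_set add: multiset.map_comp)
  also have "\<dots> = Sig L A"
    unfolding Sig_def using assms(2)
    by (intro image_mset_cong) (metis comp_apply elem_mset_set empty_iff infinite_set_mset_mset_set)
  finally show ?thesis .
qed

lemma embedding_imp_Sig_Inter_eq:
  assumes "hypergraph Vq Eq" and "embedding Vq Eq Lq VH EH LH M"
    and "S \<subseteq> Eq" and "S \<noteq> {}"
  shows "Sig Lq (\<Inter>S) = Sig LH (\<Inter>(M ` S))"
proof -
  obtain \<phi> where inj: "inj_on \<phi> Vq" and labels: "\<forall>u\<in>Vq. LH (\<phi> u) = Lq u"
    and edges: "\<forall>e\<in>Eq. \<phi> ` e = M e"
    using assms(2) unfolding embedding_def by blast
  have edges_in_Vq: "\<forall>e\<in>S. e \<subseteq> Vq"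
    using assms(1,3) unfolding hypergraph_def by blast
  then have "\<Inter>S \<subseteq> Vq"
    using assms(4) by blast
  have "\<phi> ` \<Inter>S = \<Inter>((\<lambda>e. \<phi> ` e) ` S)"
    using image_INT[OF inj, of S "\<lambda>e. e"] edges_in_Vq assms(4) by auto
  also have "(\<lambda>e. \<phi> ` e) ` S = M ` S"
    using edges assms(3) by (intro image_cong) auto
  finally have "\<phi> ` \<Inter>S = \<Inter>(M ` S)" .
  moreover have "Sig LH (\<phi> ` \<Inter>S) = Sig Lq (\<Inter>S)"
    using inj labels \<open>\<Inter>S \<subseteq> Vq\<close> by (intro Sig_image) (auto intro: inj_on_subset)
  ultimately show ?thesis
    by simp
qed

definition members :: "'i set \<Rightarrow> ('i \<Rightarrow> 'a set) \<Rightarrow> 'a \<Rightarrow> 'i set" where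
  "members I F x = {i \<in> I. x \<in> F i}"

text \<open>
  The query uses the family \<open>F = id\<close> and the data hypergraph the family \<open>F = M\<close>; both are
  indexed by the query edges, so their cells are indexed alike.
\<close>

definition venn_cell :: "'i set \<Rightarrow> ('i \<Rightarrow> 'a set) \<Rightarrow> ('a \<Rightarrow> 'l) \<Rightarrow> 'i set \<Rightarrow> 'l \<Rightarrow> 'a set" where
  "venn_cell I F L T l = {x. members I F x = T \<and> L x = l}"

lemma members_subset: "members I F x \<subseteq> I"
  unfolding members_def by blast

lemma venn_cell_subset_Union: "T \<noteq> {} \<Longrightarrow> venn_cell I F L T l \<subseteq> \<Union>(F ` I)"
  unfolding venn_cell_def members_def by auto

lemma card_label_Inter_eq_sum_venn_cells:
  assumes "finite I" and "\<And>i. i \<in> I \<Longrightarrow> finite (F i)" and "S \<subseteq> I" and "S \<noteq> {}"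
  shows "card {x \<in> \<Inter>(F ` S). L x = l} = (\<Sum>T | S \<subseteq> T \<and> T \<subseteq> I. card (venn_cell I F L T l))"
proof -
  have decomposition: "{x \<in> \<Inter>(F ` S). L x = l} = (\<Union>T \<in> {T. S \<subseteq> T \<and> T \<subseteq> I}. venn_cell I F L T l)"
  proof (intro equalityI subsetI)
    fix x assume "x \<in> {x \<in> \<Inter>(F ` S). L x = l}"
    then have "x \<in> venn_cell I F L (members I F x) l" and "S \<subseteq> members I F x"
      using assms(3) unfolding venn_cell_def members_def by blast+
    then show "x \<in> (\<Union>T \<in> {T. S \<subseteq> T \<and> T \<subseteq> I}. venn_cell I F L T l)"
      using members_subset[of I F x] by blast
  qed (unfold venn_cell_def members_def, blast)
  have "finite {T. S \<subseteq> T \<and> T \<subseteq> I}"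
    by (rule finite_subset[of _ "Pow I"]) (use assms(1) in auto)
  moreover have "finite (venn_cell I F L T l)" if "S \<subseteq> T" for T
  proof (rule finite_subset)
    show "venn_cell I F L T l \<subseteq> \<Union>(F ` I)"
      using that assms(4) by (intro venn_cell_subset_Union) blast
  qed (use assms(1,2) in simp)
  moreover have "venn_cell I F L T l \<inter> venn_cell I F L T' l = {}" if "T \<noteq> T'" for T T'
    using that unfolding venn_cell_def by blast
  ultimately show ?thesis
    unfolding decomposition by (intro card_UN_disjoint) auto
qed

text \<open>Moebius inversion on the lattice of non-empty subsets of \<open>I\<close>, by downward induction.\<close>

lemma eq_if_superset_sums_eq:
  fixes f g :: "'a set \<Rightarrow> 'b::cancel_comm_monoid_add"
  assumes "finite I"
    and sums: "\<And>S. S \<subseteq> I \<Longrightarrow> S \<noteq> {} \<Longrightarrow>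
      (\<Sum>T | S \<subseteq> T \<and> T \<subseteq> I. f T) = (\<Sum>T | S \<subseteq> T \<and> T \<subseteq> I. g T)"
  shows "S \<subseteq> I \<Longrightarrow> S \<noteq> {} \<Longrightarrow> f S = g S"
proof (induction "card (I - S)" arbitrary: S rule: less_induct)
  case less
  let ?U = "{T. S \<subset> T \<and> T \<subseteq> I}"
  have "finite ?U"
    by (rule finite_subset[of _ "Pow I"]) (use assms(1) in auto)
  have supersets: "{T. S \<subseteq> T \<and> T \<subseteq> I} = insert S ?U"
    using less.prems by auto
  have "f T = g T" if "T \<in> ?U" for T
  proof (rule less.hyps)
    show "card (I - T) < card (I - S)"
      using that assms(1) by (intro psubset_card_mono) auto
  qed (use that less.prems in auto)
  then have "(\<Sum>T\<in>?U. f T) = (\<Sum>T\<in>?U. g T)"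
    by (rule sum.cong[OF refl])
  with sums[OF less.prems] show ?case
    unfolding supersets using \<open>finite ?U\<close> by simp
qed

lemma class_preserving_bij_betw:
  assumes "finite X" and "finite Y" and "\<kappa> ` X \<subseteq> K"
    and "\<And>k. k \<in> K \<Longrightarrow> card {x \<in> X. \<kappa> x = k} = card {y \<in> Y. \<kappa>' y = k}"
  obtains \<phi> where "bij_betw \<phi> X {y \<in> Y. \<kappa>' y \<in> K}" and "\<And>x. x \<in> X \<Longrightarrow> \<kappa>' (\<phi> x) = \<kappa> x"
proof -
  have "\<forall>k\<in>K. \<exists>g. bij_betw g {x \<in> X. \<kappa> x = k} {y \<in> Y. \<kappa>' y = k}"
    using assms by (auto intro: finite_same_card_bij)
  then obtain g where g: "\<And>k. k \<in> K \<Longrightarrow> bij_betw (g k) {x \<in> X. \<kappa> x = k} {y \<in> Y. \<kappa>' y = k}"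
    by (metis bchoice)
  define \<phi> where "\<phi> x = g (\<kappa> x) x" for x
  have \<phi>: "\<phi> x \<in> Y \<and> \<kappa>' (\<phi> x) = \<kappa> x" if "x \<in> X" for x
    using bij_betwE[OF g[of "\<kappa> x"]] that assms(3) unfolding \<phi>_def by blast
  have "inj_on \<phi> X"
  proof (rule inj_onI)
    fix x x' assume "x \<in> X" and "x' \<in> X" and "\<phi> x = \<phi> x'"
    moreover from this have "\<kappa> x = \<kappa> x'"
      using \<phi> by metis
    ultimately show "x = x'"
      using bij_betw_imp_inj_on[OF g[of "\<kappa> x"]] assms(3) unfolding \<phi>_def
      by (auto dest: inj_onD)
  qed
  moreover have "\<phi> ` X = {y \<in> Y. \<kappa>' y \<in> K}"
  proof (intro equalityI subsetI)
    fix y assume "y \<in> {y \<in> Y. \<kappa>' y \<in> K}"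
    then have "y \<in> g (\<kappa>' y) ` {x \<in> X. \<kappa> x = \<kappa>' y}"
      using bij_betw_imp_surj_on[OF g[of "\<kappa>' y"]] by auto
    then show "y \<in> \<phi> ` X"
      unfolding \<phi>_def by force
  qed (use \<phi> assms(3) in auto)
  ultimately show thesis
    using that \<phi> unfolding bij_betw_def by blast
qed

lemma venn_cells_equicardinal_if_Sig_Inter_eq:
  assumes "hypergraph Vq Eq" and "hypergraph VH EH" and "\<forall>e\<in>Eq. M e \<in> EH"
    and Sig_eq: "\<forall>S. S \<subseteq> Eq \<and> S \<noteq> {} \<longrightarrow> Sig Lq (\<Inter>S) = Sig LH (\<Inter>(M ` S))"
    and "T \<subseteq> Eq" and "T \<noteq> {}"
  shows "card (venn_cell Eq id Lq T l) = card (venn_cell Eq M LH T l)"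
proof (rule eq_if_superset_sums_eq[OF hypergraph_finite_edges(1)[OF assms(1)] _ assms(5,6)])
  have finite_q: "finite e" and finite_H: "finite (M e)" if "e \<in> Eq" for e
    using that assms(3) hypergraph_finite_edges(2)[OF assms(1)] hypergraph_finite_edges(2)[OF assms(2)]
    by auto
  fix S assume S: "S \<subseteq> Eq" "S \<noteq> {}"
  then obtain e where "e \<in> S"
    by blast
  then have "finite (\<Inter>S)" and "finite (\<Inter>(M ` S))"
    using S finite_q finite_H by (meson Inter_lower INF_lower finite_subset subsetD)+
  have "(\<Sum>T | S \<subseteq> T \<and> T \<subseteq> Eq. card (venn_cell Eq id Lq T l)) = card {v \<in> \<Inter>S. Lq v = l}"
    using card_label_Inter_eq_sum_venn_cells[of Eq id S Lq l] hypergraph_finite_edges(1)[OF assms(1)]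
      finite_q S by simp
  also have "\<dots> = count (Sig Lq (\<Inter>S)) l"
    using \<open>finite (\<Inter>S)\<close> by (simp add: count_Sig)
  also have "\<dots> = count (Sig LH (\<Inter>(M ` S))) l"
    using Sig_eq S by simp
  also have "\<dots> = card {w \<in> \<Inter>(M ` S). LH w = l}"
    using \<open>finite (\<Inter>(M ` S))\<close> by (simp add: count_Sig)
  also have "\<dots> = (\<Sum>T | S \<subseteq> T \<and> T \<subseteq> Eq. card (venn_cell Eq M LH T l))"
    using card_label_Inter_eq_sum_venn_cells[of Eq M S LH l] hypergraph_finite_edges(1)[OF assms(1)]
      finite_H S by simp
  finally show "(\<Sum>T | S \<subseteq> T \<and> T \<subseteq> Eq. card (venn_cell Eq id Lq T l))
    = (\<Sum>T | S \<subseteq> T \<and> T \<subseteq> Eq. card (venn_cell Eq M LH T l))" .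
qed

lemma embedding_if_venn_cells_equicardinal:
  assumes "hypergraph Vq Eq" and "hypergraph VH EH" and "\<forall>e\<in>Eq. M e \<in> EH"
    and cells: "\<And>T l. T \<subseteq> Eq \<Longrightarrow> T \<noteq> {} \<Longrightarrow>
      card (venn_cell Eq id Lq T l) = card (venn_cell Eq M LH T l)"
  shows "embedding Vq Eq Lq VH EH LH M"
proof -
  have "finite Vq" and Union_Eq: "\<Union>Eq = Vq" and "finite VH" and edges_H: "\<Union>(M ` Eq) \<subseteq> VH"
    using assms(1-3) unfolding hypergraph_def by auto
  let ?K = "{(T, l). T \<subseteq> Eq \<and> T \<noteq> {}}"
  define \<kappa> where "\<kappa> v = (members Eq id v, Lq v)" for v
  define \<kappa>' where "\<kappa>' w = (members Eq M w, LH w)" for w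
  have classes_q: "\<kappa> ` Vq \<subseteq> ?K"
  proof (rule image_subsetI)
    fix v assume "v \<in> Vq"
    then obtain e where "e \<in> Eq" and "v \<in> e"
      using Union_Eq by blast
    then have "e \<in> members Eq id v"
      by (simp add: members_def)
    then show "\<kappa> v \<in> ?K"
      using members_subset[of Eq id v] unfolding \<kappa>_def by blast
  qed
  have class_cards: "card {v \<in> Vq. \<kappa> v = k} = card {w \<in> VH. \<kappa>' w = k}" if "k \<in> ?K" for k
  proof -
    obtain T l where k: "k = (T, l)" and T: "T \<subseteq> Eq" "T \<noteq> {}"
      using \<open>k \<in> ?K\<close> by blast
    have "{v \<in> Vq. \<kappa> v = k} = Vq \<inter> venn_cell Eq id Lq T l"
      unfolding k \<kappa>_def venn_cell_def by blast
    also have "\<dots> = venn_cell Eq id Lq T l"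
      using venn_cell_subset_Union[OF T(2), of Eq id Lq l] Union_Eq by auto
    finally have "{v \<in> Vq. \<kappa> v = k} = venn_cell Eq id Lq T l" .
    moreover have "{w \<in> VH. \<kappa>' w = k} = VH \<inter> venn_cell Eq M LH T l"
      unfolding k \<kappa>'_def venn_cell_def by blast
    moreover have "\<dots> = venn_cell Eq M LH T l"
      using venn_cell_subset_Union[OF T(2), of Eq M LH l] edges_H by blast
    ultimately show ?thesis
      using cells T by simp
  qed
  obtain \<phi> where bij: "bij_betw \<phi> Vq {w \<in> VH. \<kappa>' w \<in> ?K}"
    and same_class: "\<And>v. v \<in> Vq \<Longrightarrow> \<kappa>' (\<phi> v) = \<kappa> v"
    using class_preserving_bij_betw[OF \<open>finite Vq\<close> \<open>finite VH\<close> classes_q class_cards]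
    by blast
  have members_\<phi>: "members Eq M (\<phi> v) = members Eq id v" and label_\<phi>: "LH (\<phi> v) = Lq v"
    if "v \<in> Vq" for v
    using same_class[OF that] unfolding \<kappa>_def \<kappa>'_def by simp_all
  have edges: "\<phi> ` e = M e" if e: "e \<in> Eq" for e
  proof (intro equalityI subsetI)
    fix w assume "w \<in> \<phi> ` e"
    then obtain v where "v \<in> e" and w: "w = \<phi> v"
      by blast
    then have "v \<in> Vq" and "e \<in> members Eq id v"
      using e Union_Eq by (auto simp: members_def)
    then have "e \<in> members Eq M w"
      using members_\<phi> w by simp
    then show "w \<in> M e"
      by (simp add: members_def)
  next
    fix w assume "w \<in> M e"
    then have "e \<in> members Eq M w" and "w \<in> VH"
      using e edges_H by (auto simp: members_def)
    then have "w \<in> {w \<in> VH. \<kappa>' w \<in> ?K}"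
      using members_subset[of Eq M w] unfolding \<kappa>'_def by blast
    then have "w \<in> \<phi> ` Vq"
      using bij_betw_imp_surj_on[OF bij] by simp
    then obtain v where "v \<in> Vq" and w: "w = \<phi> v"
      by blast
    then have "e \<in> members Eq id v"
      using members_\<phi> \<open>e \<in> members Eq M w\<close> by simp
    then show "w \<in> \<phi> ` e"
      using w by (simp add: members_def)
  qed
  moreover have "inj_on \<phi> Vq" and "\<phi> ` Vq \<subseteq> VH"
    using bij unfolding bij_betw_def by auto
  ultimately show ?thesis
    unfolding embedding_def using label_\<phi> by blast
qed

theorem theorem1:
  fixes Vq :: "'v set" and Eq :: "'v set set" and Lq :: "'v \<Rightarrow> 'l"
    and VH :: "'w set" and EH :: "'w set set" and LH :: "'w \<Rightarrow> 'l"
    and M :: "'v set \<Rightarrow> 'w set"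
  assumes "hypergraph Vq Eq"
    and "hypergraph VH EH"
    and "\<forall>e\<in>Eq. M e \<in> EH"
  shows "embedding Vq Eq Lq VH EH LH M \<longleftrightarrow>
         (\<forall>S. S \<subseteq> Eq \<and> S \<noteq> {} \<longrightarrow> Sig Lq (\<Inter>S) = Sig LH (\<Inter>(M ` S)))"
proof
  assume "embedding Vq Eq Lq VH EH LH M"
  then show "\<forall>S. S \<subseteq> Eq \<and> S \<noteq> {} \<longrightarrow> Sig Lq (\<Inter>S) = Sig LH (\<Inter>(M ` S))"
    using embedding_imp_Sig_Inter_eq[OF assms(1)] by blast
next
  assume "\<forall>S. S \<subseteq> Eq \<and> S \<noteq> {} \<longrightarrow> Sig Lq (\<Inter>S) = Sig LH (\<Inter>(M ` S))"
  then show "embedding Vq Eq Lq VH EH LH M"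
    by (intro embedding_if_venn_cells_equicardinal[OF assms]
        venn_cells_equicardinal_if_Sig_Inter_eq[OF assms])
qed

end
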